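(* Let $D$ be an arc-colored digraph of order $n\geq 4$ containing no rainbow triangle, and let $v\in V(D)$ be such that $D-v\cong\overleftrightarrow{K}_{n-1}$ and $d^{s}(v)\geq 3$. Then $CN^{-}(v)\cap C^{s}(v)=\emptyset$ or $CN^{+}(v)\cap C^{s}(v)=\emptyset$. Moreover, if in addition $D\cong\overleftrightarrow{K}_4$, then $c(D)\leq 5$.
   Context: All digraphs are finite, without loops or multiple arcs (opposite arcs allowed); $\overleftrightarrow{K}_{m}$ is the complete digraph on $m$ vertices. An arc-coloring is any map $C:A(D)\to\mathbb{N}$; $c(D)$ is the number of colors used. A rainbow triangle is a directed 3-cycle with pairwise distinct arc colors. $CN^{-}(v)$ (resp. $CN^{+}(v)$) is the set of colors on the arcs entering (resp. leaving) $v$. A color $c\in C(D)$ is saturated by $v$ if every arc of color $c$ is incident to $v$; $C^{s}(v)$ is the set of colors saturated by $v$ and $d^{s}(v)=|C^{s}(v)|$. *)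

theory Defs
  imports Main
begin

text \<open>Opposite arcs are allowed, multiple arcs are impossible since A is a set.
  An arc-colouring is any map C :: 'a \<times> 'a \<Rightarrow> nat (only its values on A matter).\<close>

definition digraph :: "'a set \<Rightarrow> ('a \<times> 'a) set \<Rightarrow> bool" where
  "digraph V A \<longleftrightarrow> finite V \<and> A \<subseteq> V \<times> V \<and> (\<forall>x. (x, x) \<notin> A)"

definition complete_digraph :: "'a set \<Rightarrow> ('a \<times> 'a) set \<Rightarrow> bool" where
  "complete_digraph V A \<longleftrightarrow> A = {(x, y). x \<in> V \<and> y \<in> V \<and> x \<noteq> y}"

definition del_vertex_arcs :: "('a \<times> 'a) set \<Rightarrow> 'a \<Rightarrow> ('a \<times> 'a) set" where
  "del_vertex_arcs A v = {e \<in> A. fst e \<noteq> v \<and> snd e \<noteq> v}"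

definition colors :: "('a \<times> 'a) set \<Rightarrow> ('a \<times> 'a \<Rightarrow> nat) \<Rightarrow> nat set" where
  "colors A C = C ` A"

definition num_colors :: "('a \<times> 'a) set \<Rightarrow> ('a \<times> 'a \<Rightarrow> nat) \<Rightarrow> nat" where
  "num_colors A C = card (colors A C)"

definition rainbow_triangle ::
  "('a \<times> 'a) set \<Rightarrow> ('a \<times> 'a \<Rightarrow> nat) \<Rightarrow> 'a \<Rightarrow> 'a \<Rightarrow> 'a \<Rightarrow> bool" where
  "rainbow_triangle A C x y z \<longleftrightarrow>
     x \<noteq> y \<and> y \<noteq> z \<and> x \<noteq> z \<and>
     (x, y) \<in> A \<and> (y, z) \<in> A \<and> (z, x) \<in> A \<and>
     C (x, y) \<noteq> C (y, z) \<and> C (y, z) \<noteq> C (z, x) \<and> C (x, y) \<noteq> C (z, x)"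

definition no_rainbow_triangle :: "('a \<times> 'a) set \<Rightarrow> ('a \<times> 'a \<Rightarrow> nat) \<Rightarrow> bool" where
  "no_rainbow_triangle A C \<longleftrightarrow> (\<forall>x y z. \<not> rainbow_triangle A C x y z)"

definition in_colors :: "('a \<times> 'a) set \<Rightarrow> ('a \<times> 'a \<Rightarrow> nat) \<Rightarrow> 'a \<Rightarrow> nat set" where
  "in_colors A C v = {C (u, v) | u. (u, v) \<in> A}"

definition out_colors :: "('a \<times> 'a) set \<Rightarrow> ('a \<times> 'a \<Rightarrow> nat) \<Rightarrow> 'a \<Rightarrow> nat set" where
  "out_colors A C v = {C (v, u) | u. (v, u) \<in> A}"

definition saturated_colors :: "('a \<times> 'a) set \<Rightarrow> ('a \<times> 'a \<Rightarrow> nat) \<Rightarrow> 'a \<Rightarrow> nat set" where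
  "saturated_colors A C v =
     {c \<in> colors A C. \<forall>e \<in> A. C e = c \<longrightarrow> fst e = v \<or> snd e = v}"

definition sat_degree :: "('a \<times> 'a) set \<Rightarrow> ('a \<times> 'a \<Rightarrow> nat) \<Rightarrow> 'a \<Rightarrow> nat" where
  "sat_degree A C v = card (saturated_colors A C v)"

end

theory Submission
  imports Defs
begin

text \<open>If both an in-arc and an out-arc of v carry saturated colours, then any in-arc xv and
  out-arc vy with saturated colours and x \<noteq> y close a triangle with the arc yx of D - v, whose
  colour is not saturated; so the two saturated colours coincide, which leaves at most two
  saturated colours. For the bound on K4 assume, by reversing all arcs, that no out-colour of v
  is saturated. Then the three in-arcs of v carry the three saturated colours, every arc yx of
  D - v gets the colour of vy, and the triangle through the three other vertices shows that
  only two colours leave v.\<close>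

lemma no_rainbow_triangleD:
  assumes "no_rainbow_triangle A C"
    and "x \<noteq> y" "y \<noteq> z" "x \<noteq> z" "(x, y) \<in> A" "(y, z) \<in> A" "(z, x) \<in> A"
  shows "C (x, y) = C (y, z) \<or> C (y, z) = C (z, x) \<or> C (x, y) = C (z, x)"
  using assms by (auto simp: no_rainbow_triangle_def rainbow_triangle_def)

lemma saturated_colors_subset_in_out_colors:
  "saturated_colors A C v \<subseteq> in_colors A C v \<union> out_colors A C v"
proof
  fix s assume "s \<in> saturated_colors A C v"
  then obtain e where "e \<in> A" "C e = s" "fst e = v \<or> snd e = v"
    by (auto simp: saturated_colors_def colors_def)
  then show "s \<in> in_colors A C v \<union> out_colors A C v"
    by (cases e) (auto simp: in_colors_def out_colors_def)
qed

lemma color_not_saturated: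
  assumes "(x, y) \<in> A" "x \<noteq> v" "y \<noteq> v"
  shows "C (x, y) \<notin> saturated_colors A C v"
  using assms by (auto simp: saturated_colors_def)

lemma card_le_2_if_subset_doubleton:
  assumes "S \<subseteq> {a, b}"
  shows "card S \<le> 2"
  using card_mono[OF _ assms] by (simp add: card_insert_if split: if_splits)

lemma subset_triple_eq_if_card_ge_3:
  assumes "S \<subseteq> {a, b, c}" "card S \<ge> 3"
  shows "S = {a, b, c}"
  using card_seteq[OF _ assms(1)] assms(2) by (auto simp: card_insert_if)

lemma rainbow_triangle_converse:
  "rainbow_triangle (A\<inverse>) (C \<circ> prod.swap) x y z \<longleftrightarrow> rainbow_triangle A C x z y"
  by (auto simp: rainbow_triangle_def)

lemma no_rainbow_triangle_converse:
  "no_rainbow_triangle (A\<inverse>) (C \<circ> prod.swap) \<longleftrightarrow> no_rainbow_triangle A C"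
  by (auto simp: no_rainbow_triangle_def rainbow_triangle_converse)

lemma colors_converse: "colors (A\<inverse>) (C \<circ> prod.swap) = colors A C"
  by (force simp: colors_def)

lemma num_colors_converse: "num_colors (A\<inverse>) (C \<circ> prod.swap) = num_colors A C"
  by (simp add: num_colors_def colors_converse)

lemma saturated_colors_converse:
  "saturated_colors (A\<inverse>) (C \<circ> prod.swap) v = saturated_colors A C v"
  by (force simp: saturated_colors_def colors_converse)

lemma sat_degree_converse: "sat_degree (A\<inverse>) (C \<circ> prod.swap) v = sat_degree A C v"
  by (simp add: sat_degree_def saturated_colors_converse)

lemma out_colors_converse: "out_colors (A\<inverse>) (C \<circ> prod.swap) v = in_colors A C v"
  by (auto simp: in_colors_def out_colors_def)

lemma complete_digraph_converse: "complete_digraph V (A\<inverse>) \<longleftrightarrow> complete_digraph V A"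
  by (auto simp: complete_digraph_def)

lemma image_Un_subset_doubleton_if_agree_off_diagonal:
  assumes "x\<^sub>0 \<in> X" "y\<^sub>0 \<in> Y"
    and agree: "\<And>x y. x \<in> X \<Longrightarrow> y \<in> Y \<Longrightarrow> x \<noteq> y \<Longrightarrow> f x = g y"
  shows "\<exists>a b. f ` X \<union> g ` Y \<subseteq> {a, b}"
proof (cases "x\<^sub>0 = y\<^sub>0")
  case True
  have "f x \<in> {f x\<^sub>0, g x\<^sub>0}" if "x \<in> X" for x
    using agree[of x x\<^sub>0] that assms(2) True by (cases "x = x\<^sub>0") auto
  moreover have "g y \<in> {f x\<^sub>0, g x\<^sub>0}" if "y \<in> Y" for y
    using agree[of x\<^sub>0 y] that assms(1) by (cases "y = x\<^sub>0") auto
  ultimately show ?thesis by blast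
next
  case False
  let ?b = "if y\<^sub>0 \<in> X then f y\<^sub>0 else g x\<^sub>0"
  have "f x \<in> {f x\<^sub>0, ?b}" if "x \<in> X" for x
    using agree[of x y\<^sub>0] agree[of x\<^sub>0 y\<^sub>0] that assms(1,2) False by (cases "x = y\<^sub>0") auto
  moreover have "g y \<in> {f x\<^sub>0, ?b}" if "y \<in> Y" for y
    using agree[of x\<^sub>0 y] agree[of y\<^sub>0 x\<^sub>0] that assms(1) False by (cases "y = x\<^sub>0") auto
  ultimately show ?thesis by blast
qed

lemma saturated_in_out_colors_eq:
  assumes "digraph V A" and "complete_digraph (V - {v}) (del_vertex_arcs A v)"
    and "no_rainbow_triangle A C"
    and "(x, v) \<in> A" "(v, y) \<in> A" "x \<noteq> y"
    and "C (x, v) \<in> saturated_colors A C v" "C (v, y) \<in> saturated_colors A C v"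
  shows "C (x, v) = C (v, y)"
proof -
  have "x \<in> V" "y \<in> V" "x \<noteq> v" "y \<noteq> v"
    using assms(1,4,5) by (auto simp: digraph_def)
  then have "(y, x) \<in> A"
    using assms(2,6) by (auto simp: complete_digraph_def del_vertex_arcs_def)
  moreover have "C (y, x) \<notin> saturated_colors A C v"
    using color_not_saturated \<open>(y, x) \<in> A\<close> \<open>y \<noteq> v\<close> \<open>x \<noteq> v\<close> .
  ultimately show ?thesis
    using no_rainbow_triangleD[OF assms(3), of y x v] assms(4-8) \<open>x \<noteq> v\<close> \<open>y \<noteq> v\<close> by auto
qed

lemma saturated_colors_one_sided:
  assumes "digraph V A" and "complete_digraph (V - {v}) (del_vertex_arcs A v)"
    and "no_rainbow_triangle A C" and "sat_degree A C v \<ge> 3"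
  shows "in_colors A C v \<inter> saturated_colors A C v = {} \<or>
         out_colors A C v \<inter> saturated_colors A C v = {}"
proof (rule ccontr)
  let ?S = "saturated_colors A C v"
  define X where "X = {x. (x, v) \<in> A \<and> C (x, v) \<in> ?S}"
  define Y where "Y = {y. (v, y) \<in> A \<and> C (v, y) \<in> ?S}"
  assume "\<not> ?thesis"
  then obtain x\<^sub>0 y\<^sub>0 where "x\<^sub>0 \<in> X" "y\<^sub>0 \<in> Y"
    by (auto simp: X_def Y_def in_colors_def out_colors_def)
  moreover have "C (x, v) = C (v, y)" if "x \<in> X" "y \<in> Y" "x \<noteq> y" for x y
    using saturated_in_out_colors_eq[OF assms(1-3)] that by (simp add: X_def Y_def)
  ultimately obtain a b where ab: "(\<lambda>x. C (x, v)) ` X \<union> (\<lambda>y. C (v, y)) ` Y \<subseteq> {a, b}"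
    using image_Un_subset_doubleton_if_agree_off_diagonal by meson
  have "?S \<subseteq> (\<lambda>x. C (x, v)) ` X \<union> (\<lambda>y. C (v, y)) ` Y"
    using saturated_colors_subset_in_out_colors[of A C v]
    by (auto simp: X_def Y_def in_colors_def out_colors_def)
  then have "card ?S \<le> 2"
    using ab card_le_2_if_subset_doubleton by (meson order_trans)
  then show False
    using assms(4) by (simp add: sat_degree_def)
qed

lemma num_colors_le_5_if_out_colors_unsaturated:
  assumes "complete_digraph V A" "card V = 4" "v \<in> V"
    and nr: "no_rainbow_triangle A C" and "sat_degree A C v \<ge> 3"
    and out: "out_colors A C v \<inter> saturated_colors A C v = {}"
  shows "num_colors A C \<le> 5"
proof -
  let ?S = "saturated_colors A C v"
  have "card (V - {v}) = 3"
    using assms(2,3) by (simp add: card_Diff_singleton_if)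
  then obtain a b c where abc: "V - {v} = {a, b, c}" "a \<noteq> b" "b \<noteq> c" "a \<noteq> c"
    by (auto simp: card_3_iff)
  then have others: "v \<notin> {a, b, c}" by blast
  have arc: "(x, y) \<in> A \<longleftrightarrow> x \<in> insert v {a, b, c} \<and> y \<in> insert v {a, b, c} \<and> x \<noteq> y"
    for x y
    using assms(1,3) abc(1) by (auto simp: complete_digraph_def)
  have "?S \<subseteq> in_colors A C v"
    using saturated_colors_subset_in_out_colors[of A C v] out by blast
  also have "\<dots> = {C (a, v), C (b, v), C (c, v)}"
    using others by (auto simp: in_colors_def arc)
  finally have in_saturated: "?S = {C (a, v), C (b, v), C (c, v)}"
    using subset_triple_eq_if_card_ge_3 assms(5) by (simp add: sat_degree_def)
  have inner_color: "C (y, x) = C (v, y)" if "x \<in> {a, b, c}" "y \<in> {a, b, c}" "x \<noteq> y" for x y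
  proof -
    have arcs: "(x, v) \<in> A" "(v, y) \<in> A" "(y, x) \<in> A"
      using that others by (auto simp: arc)
    have "C (x, v) \<in> ?S" using in_saturated that(1) by blast
    moreover have "C (v, y) \<notin> ?S"
      using out arcs(2) by (auto simp: out_colors_def)
    moreover have "C (y, x) \<notin> ?S"
      using that others by (intro color_not_saturated[OF arcs(3)]) auto
    ultimately show ?thesis
      using no_rainbow_triangleD[OF nr _ _ _ arcs(1,2,3)] that others by auto
  qed
  have "C (a, c) = C (c, b) \<or> C (c, b) = C (b, a) \<or> C (a, c) = C (b, a)"
    using no_rainbow_triangleD[OF nr] abc(2-4) others by (simp add: arc)
  then have "C (v, a) = C (v, c) \<or> C (v, c) = C (v, b) \<or> C (v, a) = C (v, b)"
    using inner_color[of c a] inner_color[of b c] inner_color[of a b] abc(2-4) by simp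
  then have out_two: "card {C (v, a), C (v, b), C (v, c)} \<le> 2"
    by (elim disjE) (auto intro: card_le_2_if_subset_doubleton)
  have in_three: "card {C (a, v), C (b, v), C (c, v)} \<le> 3"
    by (simp add: card_insert_if)
  have "colors A C \<subseteq> {C (a, v), C (b, v), C (c, v)} \<union> {C (v, a), C (v, b), C (v, c)}"
    using inner_color by (auto simp: colors_def arc)
  then have "num_colors A C \<le> card ({C (a, v), C (b, v), C (c, v)} \<union> {C (v, a), C (v, b), C (v, c)})"
    unfolding num_colors_def by (simp add: card_mono)
  also have "\<dots> \<le> 3 + 2"
    using card_Un_le in_three out_two by (meson add_mono order_trans)
  finally show ?thesis by simp
qed

theorem lemma1:
  fixes V :: "'a set" and A :: "('a \<times> 'a) set" and C :: "'a \<times> 'a \<Rightarrow> nat" and v :: 'a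
  assumes "digraph V A"
    and "card V \<ge> 4"
    and "no_rainbow_triangle A C"
    and "v \<in> V"
    and "complete_digraph (V - {v}) (del_vertex_arcs A v)"
    and "sat_degree A C v \<ge> 3"
  shows "(in_colors A C v \<inter> saturated_colors A C v = {} \<or>
          out_colors A C v \<inter> saturated_colors A C v = {})
       \<and> (complete_digraph V A \<and> card V = 4 \<longrightarrow> num_colors A C \<le> 5)"
proof
  show one_sided: "in_colors A C v \<inter> saturated_colors A C v = {} \<or>
          out_colors A C v \<inter> saturated_colors A C v = {}"
    using saturated_colors_one_sided[OF assms(1,5,3,6)] .
  show "complete_digraph V A \<and> card V = 4 \<longrightarrow> num_colors A C \<le> 5"
  proof
    assume K4: "complete_digraph V A \<and> card V = 4"
    note K4_bound = num_colors_le_5_if_out_colors_unsaturated[OF _ _ \<open>v \<in> V\<close>]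
    from one_sided show "num_colors A C \<le> 5"
    proof
      assume "in_colors A C v \<inter> saturated_colors A C v = {}"
      then show ?thesis
        using K4_bound[of "A\<inverse>" "C \<circ> prod.swap"] K4 assms(3,6)
        by (simp add: complete_digraph_converse no_rainbow_triangle_converse num_colors_converse
            sat_degree_converse saturated_colors_converse out_colors_converse)
    next
      assume "out_colors A C v \<inter> saturated_colors A C v = {}"
      then show ?thesis using K4_bound K4 assms(3,6) by blast
    qed
  qed
qed

end
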